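(* Let $1\le p<\infty$, let $(e_j)_{j\in\mathbb{Z}}$ be the standard basis of $\ell^p(\mathbb{Z})$, $\mathscr{N}_k=\bigvee\{e_j:j\le k\}$ for $k\in\mathbb{Z}$, and $\mathfrak{N}=\{\mathscr{N}_k:k\in\mathbb{Z}\}\cup\{\{0\},\ell^p(\mathbb{Z})\}$. Let $W$ be the bilateral shift, $We_k=e_{k+1}$ ($k\in\mathbb{Z}$), and $\mathcal{O}(\mathfrak{N})=\{W^k:k\in\mathbb{Z}\}$. Then $\mathrm{Col}(\mathfrak{N})=\mathrm{Grp}(\mathrm{Alg}(\mathfrak{N}))\rtimes\mathcal{O}(\mathfrak{N})$.
   Context: $\bigvee$ denotes closed linear span. $\mathrm{Alg}(\mathfrak{F})$ is the set of bounded operators leaving every subspace of $\mathfrak{F}$ invariant; $\mathrm{Grp}(\mathcal{A})$ is the group of invertible $S\in\mathcal{A}$ with $S^{-1}\in\mathcal{A}$. $\mathrm{Col}(\mathfrak{F})$ is the group of invertible bounded $S$ such that for every closed subspace $\mathscr{M}$: $\mathscr{M}\in\mathfrak{F}$ iff $S\mathscr{M}\in\mathfrak{F}$. For a subgroup $\mathcal{O}\subseteq\mathrm{Col}(\mathfrak{F})$, $\mathrm{Col}(\mathfrak{F})=\mathrm{Grp}(\mathrm{Alg}(\mathfrak{F}))\rtimes\mathcal{O}$ means $\mathrm{Col}(\mathfrak{F})=\{AT:A\in\mathrm{Grp}(\mathrm{Alg}(\mathfrak{F})),T\in\mathcal{O}\}$ and $\mathrm{Grp}(\mathrm{Alg}(\mathfrak{F}))\cap\mathcal{O}=\{I\}$.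 *)

theory Defs
  imports "HOL-Analysis.Analysis"
begin

type_synonym seq = "int \<Rightarrow> complex"

definition lp :: "real \<Rightarrow> seq set" where
  "lp p = {x. (\<lambda>j. norm (x j) powr p) summable_on UNIV}"

definition lp_norm :: "real \<Rightarrow> seq \<Rightarrow> real" where
  "lp_norm p x = (infsum (\<lambda>j. norm (x j) powr p) UNIV) powr (1 / p)"

definition zero_seq :: seq where "zero_seq = (\<lambda>j. 0)"

definition std_basis :: "int \<Rightarrow> seq" where
  "std_basis k = (\<lambda>j. if j = k then 1 else 0)"

definition closed_subspace :: "real \<Rightarrow> seq set \<Rightarrow> bool" where
  "closed_subspace p M \<longleftrightarrow> M \<subseteq> lp p \<and> zero_seq \<in> M
     \<and> (\<forall>x\<in>M. \<forall>y\<in>M. (\<lambda>j. x j + y j) \<in> M)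
     \<and> (\<forall>c::complex. \<forall>x\<in>M. (\<lambda>j. c * x j) \<in> M)
     \<and> (\<forall>u x. (\<forall>n. u n \<in> M) \<and> x \<in> lp p
            \<and> (\<lambda>n. lp_norm p (\<lambda>j. u n j - x j)) \<longlonglongrightarrow> 0 \<longrightarrow> x \<in> M)"

definition closed_span :: "real \<Rightarrow> seq set \<Rightarrow> seq set" where
  "closed_span p S = \<Inter>{M. closed_subspace p M \<and> S \<subseteq> M}"

text \<open>Bounded operators on ell^p(Z). They are represented extensionally:
 as maps on all sequences that vanish outside ell^p(Z), so that two operators
 are equal iff they agree on ell^p(Z).\<close>
definition bounded_op :: "real \<Rightarrow> (seq \<Rightarrow> seq) \<Rightarrow> bool" where
  "bounded_op p T \<longleftrightarrow>
     (\<forall>x\<in>lp p. T x \<in> lp p)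
   \<and> (\<forall>x. x \<notin> lp p \<longrightarrow> T x = zero_seq)
   \<and> (\<forall>x\<in>lp p. \<forall>y\<in>lp p. T (\<lambda>j. x j + y j) = (\<lambda>j. T x j + T y j))
   \<and> (\<forall>c::complex. \<forall>x\<in>lp p. T (\<lambda>j. c * x j) = (\<lambda>j. c * T x j))
   \<and> (\<exists>C. \<forall>x\<in>lp p. lp_norm p (T x) \<le> C * lp_norm p x)"

definition lp_id :: "real \<Rightarrow> seq \<Rightarrow> seq" where
  "lp_id p x = (if x \<in> lp p then x else zero_seq)"

definition invertible_op :: "real \<Rightarrow> (seq \<Rightarrow> seq) \<Rightarrow> bool" where
  "invertible_op p S \<longleftrightarrow> bounded_op p S \<and>
     (\<exists>R. bounded_op p R \<and> R \<circ> S = lp_id p \<and> S \<circ> R = lp_id p)"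

definition Alg :: "real \<Rightarrow> seq set set \<Rightarrow> (seq \<Rightarrow> seq) set" where
  "Alg p F = {T. bounded_op p T \<and> (\<forall>M\<in>F. T ` M \<subseteq> M)}"

definition Grp :: "real \<Rightarrow> (seq \<Rightarrow> seq) set \<Rightarrow> (seq \<Rightarrow> seq) set" where
  "Grp p A = {S. S \<in> A \<and> (\<exists>R\<in>A. bounded_op p R \<and> R \<circ> S = lp_id p \<and> S \<circ> R = lp_id p)}"

definition Col :: "real \<Rightarrow> seq set set \<Rightarrow> (seq \<Rightarrow> seq) set" where
  "Col p F = {S. invertible_op p S \<and>
     (\<forall>M. closed_subspace p M \<longrightarrow> (M \<in> F \<longleftrightarrow> S ` M \<in> F))}"

definition nest_N :: "real \<Rightarrow> int \<Rightarrow> seq set" where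
  "nest_N p k = closed_span p {std_basis j | j. j \<le> k}"

definition nestN :: "real \<Rightarrow> seq set set" where
  "nestN p = range (nest_N p) \<union> {{zero_seq}, lp p}"

definition shift_pow :: "real \<Rightarrow> int \<Rightarrow> seq \<Rightarrow> seq" where
  "shift_pow p k x = (if x \<in> lp p then (\<lambda>j. x (j - k)) else zero_seq)"

definition Orb :: "real \<Rightarrow> (seq \<Rightarrow> seq) set" where
  "Orb p = range (shift_pow p)"

end

theory Submission
  imports Defs
begin

text \<open>An invertible operator S in Col(N) permutes the members of N, and so does its inverse.
  Both preserve inclusion and fix {0} and ell^p, hence S N_k = N_(\<phi> k) for an order automorphism
  \<phi> of the integers. Order automorphisms of the integers are translations k \<mapsto> k + m, and
  W^m N_k = N_(k+m), so S W^(-m) fixes every N_k, and so does its inverse: S W^(-m) lies in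
  Grp(Alg N). The factorisation is unique because W^m fixes N_0 only for m = 0.\<close>

section \<open>Order automorphisms of the integers\<close>

lemma strict_mono_surj_int_is_translation:
  fixes \<phi> :: "int \<Rightarrow> int"
  assumes mono: "strict_mono \<phi>" and surj: "surj \<phi>"
  shows "\<phi> k = k + \<phi> 0"
proof -
  have step: "\<phi> (i + 1) = \<phi> i + 1" for i
  proof (rule ccontr)
    assume "\<phi> (i + 1) \<noteq> \<phi> i + 1"
    moreover have "\<phi> i < \<phi> (i + 1)" using strict_monoD[OF mono] by simp
    ultimately have gap: "\<phi> i < \<phi> i + 1" "\<phi> i + 1 < \<phi> (i + 1)" by simp_all
    obtain l where l: "\<phi> l = \<phi> i + 1" using surj by (metis surjD)
    have "i < l" "l < i + 1"
      using gap strict_mono_less[OF mono] unfolding l[symmetric] by blast+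
    then show False by simp
  qed
  show ?thesis
  proof (induction k rule: int_induct[where k = 0])
    case (step1 i) then show ?case using step[of i] by simp
  next
    case (step2 i) then show ?case using step[of "i - 1"] by simp
  qed simp
qed

section \<open>Sequences in ell^p and bounded operators\<close>

lemma zero_seq_in_lp [simp]: "zero_seq \<in> lp p"
  by (simp add: lp_def zero_seq_def)

lemma std_basis_in_lp [simp]: "std_basis k \<in> lp p"
proof -
  have "(\<lambda>j. norm (std_basis k j) powr p) summable_on {k}" by simp
  then have "(\<lambda>j. norm (std_basis k j) powr p) summable_on UNIV"
    by (rule summable_on_cong_neutral[THEN iffD1, rotated -1]) (auto simp: std_basis_def)
  then show ?thesis by (simp add: lp_def)
qed

lemma std_basis_neq_zero_seq: "std_basis j \<noteq> zero_seq"
  by (metis std_basis_def zero_neq_one zero_seq_def)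

lemma norm_add_powr_le:
  fixes a b :: "'a :: real_normed_vector"
  assumes "0 \<le> p"
  shows "norm (a + b) powr p \<le> 2 powr p * (norm a powr p + norm b powr p)"
proof -
  have "norm (a + b) powr p \<le> (2 * max (norm a) (norm b)) powr p"
    using norm_triangle_ineq[of a b] assms by (intro powr_mono2) auto
  also have "\<dots> = 2 powr p * max (norm a) (norm b) powr p"
    by (simp add: powr_mult)
  also have "\<dots> \<le> 2 powr p * (norm a powr p + norm b powr p)"
    by (intro mult_left_mono) (auto simp: max_def)
  finally show ?thesis .
qed

lemma lp_add:
  assumes "0 \<le> p" "x \<in> lp p" "y \<in> lp p"
  shows "(\<lambda>j. x j + y j) \<in> lp p"
proof -
  have "(\<lambda>j. 2 powr p * (norm (x j) powr p + norm (y j) powr p)) summable_on UNIV"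
    using assms unfolding lp_def by (intro summable_on_cmult_right summable_on_add) auto
  then show ?thesis unfolding lp_def
    by (intro CollectI summable_on_comparison_test[OF _ norm_add_powr_le[OF assms(1)]]) auto
qed

lemma lp_cmult:
  assumes "x \<in> lp p"
  shows "(\<lambda>j. c * x j) \<in> lp p"
proof -
  have "(\<lambda>j. norm c powr p * norm (x j) powr p) summable_on UNIV"
    using assms unfolding lp_def by (intro summable_on_cmult_right) auto
  then show ?thesis unfolding lp_def by (simp add: norm_mult powr_mult)
qed

lemma lp_diff:
  assumes "0 \<le> p" "x \<in> lp p" "y \<in> lp p"
  shows "(\<lambda>j. x j - y j) \<in> lp p"
  using lp_add[OF assms(1,2) lp_cmult[OF assms(3), of "-1"]] by simp

lemma norm_le_lp_norm:
  assumes p: "0 < p" and x: "x \<in> lp p"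
  shows "norm (x j) \<le> lp_norm p x"
proof -
  let ?f = "\<lambda>j. norm (x j) powr p"
  have "?f j = infsum ?f {j}" by simp
  also have "\<dots> \<le> infsum ?f UNIV"
    using x unfolding lp_def by (intro infsum_mono_neutral) auto
  finally have "(?f j) powr (1/p) \<le> infsum ?f UNIV powr (1/p)"
    using p by (intro powr_mono2) auto
  then show ?thesis using p by (simp add: lp_norm_def powr_powr)
qed

lemma lp_norm_nonneg: "0 \<le> lp_norm p x"
  by (simp add: lp_norm_def)

lemma bounded_op_in_lp: "bounded_op p T \<Longrightarrow> T x \<in> lp p"
  unfolding bounded_op_def by (cases "x \<in> lp p") auto

lemma bounded_op_outside_lp: "bounded_op p T \<Longrightarrow> x \<notin> lp p \<Longrightarrow> T x = zero_seq"
  unfolding bounded_op_def by blast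

lemma bounded_op_add:
  "bounded_op p T \<Longrightarrow> x \<in> lp p \<Longrightarrow> y \<in> lp p \<Longrightarrow> T (\<lambda>j. x j + y j) = (\<lambda>j. T x j + T y j)"
  unfolding bounded_op_def by blast

lemma bounded_op_cmult:
  "bounded_op p T \<Longrightarrow> x \<in> lp p \<Longrightarrow> T (\<lambda>j. c * x j) = (\<lambda>j. c * T x j)"
  unfolding bounded_op_def by blast

lemma bounded_op_zero: "bounded_op p T \<Longrightarrow> T zero_seq = zero_seq"
  using bounded_op_cmult[OF _ zero_seq_in_lp, of p T 0] by (simp add: zero_seq_def)

lemma bounded_op_diff:
  assumes "bounded_op p T" "x \<in> lp p" "y \<in> lp p"
  shows "T (\<lambda>j. x j - y j) = (\<lambda>j. T x j - T y j)"
  using bounded_op_add[OF assms(1,2) lp_cmult[OF assms(3)], of "-1"]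
    bounded_op_cmult[OF assms(1,3), of "-1"]
  by simp

lemma bounded_opE:
  assumes "bounded_op p T"
  obtains C where "C \<ge> 0" "\<And>x. x \<in> lp p \<Longrightarrow> lp_norm p (T x) \<le> C * lp_norm p x"
proof -
  obtain C where C: "\<And>x. x \<in> lp p \<Longrightarrow> lp_norm p (T x) \<le> C * lp_norm p x"
    using assms unfolding bounded_op_def by blast
  have "lp_norm p (T x) \<le> max C 0 * lp_norm p x" if "x \<in> lp p" for x
    using C[OF that] mult_right_mono[OF max.cobounded1 lp_norm_nonneg] by (rule order_trans)
  then show ?thesis using that[of "max C 0"] by simp
qed

lemma bounded_op_comp:
  assumes T: "bounded_op p T" and U: "bounded_op p U"
  shows "bounded_op p (T \<circ> U)"
proof -
  obtain C where C: "C \<ge> 0" "\<And>x. x \<in> lp p \<Longrightarrow> lp_norm p (T x) \<le> C * lp_norm p x"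
    using bounded_opE[OF T] by blast
  obtain D where D: "\<And>x. x \<in> lp p \<Longrightarrow> lp_norm p (U x) \<le> D * lp_norm p x"
    using bounded_opE[OF U] by blast
  have "lp_norm p (T (U x)) \<le> (C * D) * lp_norm p x" if x: "x \<in> lp p" for x
  proof -
    have "lp_norm p (T (U x)) \<le> C * lp_norm p (U x)" using C(2) bounded_op_in_lp[OF U] by blast
    also have "\<dots> \<le> C * (D * lp_norm p x)" using D[OF x] C(1) by (rule mult_left_mono)
    finally show ?thesis by simp
  qed
  then show ?thesis
    using bounded_op_in_lp[OF T] bounded_op_outside_lp[OF U] bounded_op_zero[OF T]
      bounded_op_add[OF U] bounded_op_add[OF T] bounded_op_cmult[OF U] bounded_op_cmult[OF T]
      bounded_op_in_lp[OF U]
    unfolding bounded_op_def comp_apply by auto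
qed

lemma comp_lp_id: "bounded_op p T \<Longrightarrow> T \<circ> lp_id p = T"
  by (simp add: fun_eq_iff lp_id_def bounded_op_outside_lp bounded_op_zero)

section \<open>Closed subspaces\<close>

lemma closed_subspace_subset_lp: "closed_subspace p M \<Longrightarrow> M \<subseteq> lp p"
  unfolding closed_subspace_def by blast

lemma closed_subspace_lp: "0 \<le> p \<Longrightarrow> closed_subspace p (lp p)"
  unfolding closed_subspace_def by (auto simp: lp_add lp_cmult)

lemma closed_subspace_Inter:
  assumes F: "\<And>M. M \<in> F \<Longrightarrow> closed_subspace p M" and "F \<noteq> {}"
  shows "closed_subspace p (\<Inter>F)"
  unfolding closed_subspace_def
proof (intro conjI allI impI)
  show "\<Inter>F \<subseteq> lp p" using assms closed_subspace_subset_lp by blast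
  fix u x
  assume "(\<forall>n. u n \<in> \<Inter>F) \<and> x \<in> lp p \<and> (\<lambda>n. lp_norm p (\<lambda>j. u n j - x j)) \<longlonglongrightarrow> 0"
  then show "x \<in> \<Inter>F"
    using F unfolding closed_subspace_def by blast
qed (use F in \<open>unfold closed_subspace_def, blast+\<close>)

lemma closed_subspace_closed_span:
  "0 \<le> p \<Longrightarrow> S \<subseteq> lp p \<Longrightarrow> closed_subspace p (closed_span p S)"
  unfolding closed_span_def using closed_subspace_lp by (intro closed_subspace_Inter) auto

lemma closed_span_superset: "S \<subseteq> closed_span p S"
  unfolding closed_span_def by blast

lemma closed_span_least: "closed_subspace p M \<Longrightarrow> S \<subseteq> M \<Longrightarrow> closed_span p S \<subseteq> M"
  unfolding closed_span_def by blast

lemma closed_span_mono: "S \<subseteq> S' \<Longrightarrow> closed_span p S \<subseteq> closed_span p S'"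
  unfolding closed_span_def by blast

lemma closed_subspace_lp_vanishing:
  assumes p: "0 < p"
  shows "closed_subspace p {x \<in> lp p. \<forall>j\<in>J. x j = 0}"
  unfolding closed_subspace_def
proof (intro conjI allI impI)
  fix u x
  assume "(\<forall>n. u n \<in> {x \<in> lp p. \<forall>j\<in>J. x j = 0}) \<and> x \<in> lp p
    \<and> (\<lambda>n. lp_norm p (\<lambda>j. u n j - x j)) \<longlonglongrightarrow> 0"
  then have u: "\<And>n. u n \<in> lp p" "\<And>n j. j \<in> J \<Longrightarrow> u n j = 0" and x: "x \<in> lp p"
    and lim: "(\<lambda>n. lp_norm p (\<lambda>j. u n j - x j)) \<longlonglongrightarrow> 0" by auto
  have "x j = 0" if j: "j \<in> J" for j
  proof -
    have "norm (x j) \<le> lp_norm p (\<lambda>j. u n j - x j)" for n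
      using norm_le_lp_norm[OF p lp_diff[OF _ u(1) x], of n j] u(2)[OF j, of n] p by simp
    then have "norm (x j) \<le> 0" by (intro LIMSEQ_le_const[OF lim]) auto
    then show ?thesis by simp
  qed
  then show "x \<in> {x \<in> lp p. \<forall>j\<in>J. x j = 0}" using x by blast
qed (use p in \<open>auto simp: zero_seq_def lp_add lp_cmult zero_seq_in_lp[unfolded zero_seq_def]\<close>)

lemma closed_subspace_vimage:
  assumes p: "0 < p" and T: "bounded_op p T" and M: "closed_subspace p M"
  shows "closed_subspace p {x \<in> lp p. T x \<in> M}"
  unfolding closed_subspace_def
proof (intro conjI allI impI)
  have Mc: "\<And>u x. \<forall>n. u n \<in> M \<Longrightarrow> x \<in> lp p \<Longrightarrow> (\<lambda>n. lp_norm p (\<lambda>j. u n j - x j)) \<longlonglongrightarrow> 0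
      \<Longrightarrow> x \<in> M"
    using M unfolding closed_subspace_def by blast
  fix u x
  assume "(\<forall>n. u n \<in> {x \<in> lp p. T x \<in> M}) \<and> x \<in> lp p
    \<and> (\<lambda>n. lp_norm p (\<lambda>j. u n j - x j)) \<longlonglongrightarrow> 0"
  then have u: "\<And>n. u n \<in> lp p" "\<And>n. T (u n) \<in> M" and x: "x \<in> lp p"
    and lim: "(\<lambda>n. lp_norm p (\<lambda>j. u n j - x j)) \<longlonglongrightarrow> 0" by auto
  obtain C where C: "\<And>x. x \<in> lp p \<Longrightarrow> lp_norm p (T x) \<le> C * lp_norm p x"
    using bounded_opE[OF T] by blast
  have le: "lp_norm p (\<lambda>j. T (u n) j - T x j) \<le> C * lp_norm p (\<lambda>j. u n j - x j)" for n
    using C[OF lp_diff[OF _ u(1) x]] bounded_op_diff[OF T u(1) x] p by simp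
  have "(\<lambda>n. lp_norm p (\<lambda>j. T (u n) j - T x j)) \<longlonglongrightarrow> 0"
    by (rule real_tendsto_sandwich[OF _ _ tendsto_const tendsto_mult_right_zero[OF lim, of C]])
      (simp_all add: le lp_norm_nonneg)
  then have "T x \<in> M" using u(2) bounded_op_in_lp[OF T] by (intro Mc) auto
  then show "x \<in> {x \<in> lp p. T x \<in> M}" using x by blast
qed (use M p in \<open>auto simp: closed_subspace_def bounded_op_zero[OF T] bounded_op_add[OF T]
      bounded_op_cmult[OF T] lp_add lp_cmult\<close>)

section \<open>Invertible operators\<close>

definition inv_pair :: "real \<Rightarrow> (seq \<Rightarrow> seq) \<Rightarrow> (seq \<Rightarrow> seq) \<Rightarrow> bool" where
  "inv_pair p T R \<longleftrightarrow> bounded_op p T \<and> bounded_op p R \<and> R \<circ> T = lp_id p \<and> T \<circ> R = lp_id p"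

lemma inv_pair_sym: "inv_pair p T R \<Longrightarrow> inv_pair p R T"
  unfolding inv_pair_def by blast

lemma inv_pair_bounded_op: "inv_pair p T R \<Longrightarrow> bounded_op p T"
  unfolding inv_pair_def by blast

lemma inv_pair_cancel: "inv_pair p T R \<Longrightarrow> x \<in> lp p \<Longrightarrow> R (T x) = x"
  unfolding inv_pair_def lp_id_def by (metis comp_apply)

lemma inv_pair_image_cancel: "inv_pair p T R \<Longrightarrow> M \<subseteq> lp p \<Longrightarrow> R ` T ` M = M"
  by (force simp: image_image inv_pair_cancel)

lemma inv_pair_image_subset_iff:
  assumes "inv_pair p T R" "A \<subseteq> lp p" "B \<subseteq> lp p"
  shows "T ` A \<subseteq> T ` B \<longleftrightarrow> A \<subseteq> B"
proof
  assume "T ` A \<subseteq> T ` B"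
  then have "R ` T ` A \<subseteq> R ` T ` B" by (rule image_mono)
  then show "A \<subseteq> B"
    unfolding inv_pair_image_cancel[OF assms(1,2)] inv_pair_image_cancel[OF assms(1,3)] .
qed (rule image_mono)

lemma inv_pair_image_lp:
  assumes "inv_pair p T R"
  shows "T ` lp p = lp p"
proof
  show "T ` lp p \<subseteq> lp p" using bounded_op_in_lp[OF inv_pair_bounded_op[OF assms]] by blast
  have "T ` R ` lp p \<subseteq> T ` lp p"
    using bounded_op_in_lp[OF inv_pair_bounded_op[OF inv_pair_sym[OF assms]]] by blast
  then show "lp p \<subseteq> T ` lp p"
    unfolding inv_pair_image_cancel[OF inv_pair_sym[OF assms] order_refl] .
qed

lemma inv_pair_image_eq_vimage:
  assumes "inv_pair p T R" "M \<subseteq> lp p"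
  shows "T ` M = {x \<in> lp p. R x \<in> M}"
  using assms inv_pair_cancel[OF assms(1)] inv_pair_cancel[OF inv_pair_sym[OF assms(1)]]
    bounded_op_in_lp[OF inv_pair_bounded_op[OF assms(1)]]
  by (auto intro!: image_eqI)

lemma closed_subspace_inv_pair_image:
  assumes "0 < p" "inv_pair p T R" "closed_subspace p M"
  shows "closed_subspace p (T ` M)"
  unfolding inv_pair_image_eq_vimage[OF assms(2) closed_subspace_subset_lp[OF assms(3)]]
  using assms by (intro closed_subspace_vimage inv_pair_bounded_op[OF inv_pair_sym])

lemma inv_pair_image_closed_span:
  assumes p: "0 < p" and TR: "inv_pair p T R" and S: "S \<subseteq> lp p"
  shows "T ` closed_span p S = closed_span p (T ` S)"
proof
  have T: "bounded_op p T" using inv_pair_bounded_op[OF TR] .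
  have "T ` S \<subseteq> lp p" using bounded_op_in_lp[OF T] by blast
  then have "closed_span p S \<subseteq> {x \<in> lp p. T x \<in> closed_span p (T ` S)}"
    using S closed_span_superset[of "T ` S" p] p
    by (intro closed_span_least closed_subspace_vimage[OF p T] closed_subspace_closed_span) auto
  then show "T ` closed_span p S \<subseteq> closed_span p (T ` S)" by blast
  show "closed_span p (T ` S) \<subseteq> T ` closed_span p S"
    using S p closed_span_superset
    by (intro closed_span_least closed_subspace_inv_pair_image[OF p TR] closed_subspace_closed_span
        image_mono) auto
qed

lemma inv_pair_comp:
  assumes TR: "inv_pair p T R" and TR': "inv_pair p T' R'"
  shows "inv_pair p (T \<circ> T') (R' \<circ> R)"
proof -
  have b: "bounded_op p T" "bounded_op p R" "bounded_op p T'" "bounded_op p R'"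
    and e: "R \<circ> T = lp_id p" "T \<circ> R = lp_id p" "R' \<circ> T' = lp_id p" "T' \<circ> R' = lp_id p"
    using TR TR' unfolding inv_pair_def by blast+
  have "(R' \<circ> R) \<circ> (T \<circ> T') = R' \<circ> (R \<circ> T) \<circ> T'" "(T \<circ> T') \<circ> (R' \<circ> R) = T \<circ> (T' \<circ> R') \<circ> R"
    by (simp_all add: o_assoc)
  then show ?thesis
    using e comp_lp_id[OF b(4)] comp_lp_id[OF b(1)] b bounded_op_comp unfolding inv_pair_def by simp
qed

lemma Col_iff:
  assumes p: "0 < p" and F: "\<And>M. M \<in> F \<Longrightarrow> closed_subspace p M"
  shows "S \<in> Col p F \<longleftrightarrow> (\<exists>R. inv_pair p S R \<and> (\<forall>M\<in>F. S ` M \<in> F) \<and> (\<forall>M\<in>F. R ` M \<in> F))"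
proof
  assume "S \<in> Col p F"
  then obtain R where SR: "inv_pair p S R"
    and col: "\<And>M. closed_subspace p M \<Longrightarrow> M \<in> F \<longleftrightarrow> S ` M \<in> F"
    unfolding Col_def invertible_op_def inv_pair_def by blast
  have "R ` M \<in> F" if M: "M \<in> F" for M
  proof -
    have "S ` R ` M \<in> F"
      using inv_pair_image_cancel[OF inv_pair_sym[OF SR] closed_subspace_subset_lp[OF F[OF M]]] M
      by simp
    then show ?thesis
      using col closed_subspace_inv_pair_image[OF p inv_pair_sym[OF SR] F[OF M]] by blast
  qed
  then show "\<exists>R. inv_pair p S R \<and> (\<forall>M\<in>F. S ` M \<in> F) \<and> (\<forall>M\<in>F. R ` M \<in> F)"
    using SR col F by blast
next
  assume "\<exists>R. inv_pair p S R \<and> (\<forall>M\<in>F. S ` M \<in> F) \<and> (\<forall>M\<in>F. R ` M \<in> F)"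
  then obtain R where SR: "inv_pair p S R" and SF: "\<forall>M\<in>F. S ` M \<in> F" and RF: "\<forall>M\<in>F. R ` M \<in> F"
    by blast
  have "M \<in> F" if M: "closed_subspace p M" and SM: "S ` M \<in> F" for M
  proof -
    have "R ` S ` M \<in> F" using RF SM by blast
    then show ?thesis unfolding inv_pair_image_cancel[OF SR closed_subspace_subset_lp[OF M]] .
  qed
  then show "S \<in> Col p F"
    using SR SF unfolding Col_def invertible_op_def inv_pair_def by blast
qed

lemma Grp_Alg_iff:
  assumes F: "\<Union>F \<subseteq> lp p"
  shows "A \<in> Grp p (Alg p F) \<longleftrightarrow> (\<exists>R. inv_pair p A R \<and> (\<forall>M\<in>F. A ` M = M))"
proof
  assume "A \<in> Grp p (Alg p F)"
  then obtain R where A: "A \<in> Alg p F" and R: "R \<in> Alg p F" "R \<circ> A = lp_id p" "A \<circ> R = lp_id p"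
    unfolding Grp_def by blast
  then have AR: "inv_pair p A R" unfolding inv_pair_def Alg_def by blast
  have "A ` M = M" if M: "M \<in> F" for M
  proof
    show "A ` M \<subseteq> M" using A M unfolding Alg_def by blast
    have "R ` M \<subseteq> M" using R(1) M unfolding Alg_def by blast
    then show "M \<subseteq> A ` M"
      using inv_pair_image_cancel[OF inv_pair_sym[OF AR] Union_upper[OF M, THEN order_trans, OF F]]
      by blast
  qed
  with AR show "\<exists>R. inv_pair p A R \<and> (\<forall>M\<in>F. A ` M = M)" by blast
next
  assume "\<exists>R. inv_pair p A R \<and> (\<forall>M\<in>F. A ` M = M)"
  then obtain R where AR: "inv_pair p A R" and AM: "\<forall>M\<in>F. A ` M = M" by blast
  have "R ` M = M" if "M \<in> F" for M
    using inv_pair_image_cancel[OF AR Union_upper[OF that, THEN order_trans, OF F]] AM that by simp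
  then have "A \<in> Alg p F" "R \<in> Alg p F"
    using AR AM unfolding Alg_def inv_pair_def by auto
  then show "A \<in> Grp p (Alg p F)"
    using AR unfolding Grp_def inv_pair_def by blast
qed

section \<open>The bilateral shift\<close>

lemma bij_betw_int_diff: "bij_betw (\<lambda>j::int. j - k) UNIV UNIV"
  by (rule bij_betw_byWitness[where f' = "\<lambda>j. j + k"]) auto

lemma lp_shift: "x \<in> lp p \<Longrightarrow> (\<lambda>j. x (j - k)) \<in> lp p"
  unfolding lp_def
  using summable_on_reindex_bij_betw[OF bij_betw_int_diff[of k], of "\<lambda>j. norm (x j) powr p"]
  by simp

lemma lp_norm_shift: "lp_norm p (\<lambda>j. x (j - k)) = lp_norm p x"
  unfolding lp_norm_def
  using infsum_reindex_bij_betw[OF bij_betw_int_diff[of k], of "\<lambda>j. norm (x j) powr p"]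
  by simp

lemma bounded_op_shift_pow: "0 \<le> p \<Longrightarrow> bounded_op p (shift_pow p k)"
  unfolding bounded_op_def shift_pow_def
  by (auto simp: lp_shift lp_add lp_cmult lp_norm_shift intro!: exI[of _ 1])

lemma shift_pow_add: "shift_pow p a \<circ> shift_pow p b = shift_pow p (a + b)"
  by (auto simp: fun_eq_iff shift_pow_def lp_shift algebra_simps zero_seq_def)

lemma shift_pow_0: "shift_pow p 0 = lp_id p"
  by (auto simp: shift_pow_def lp_id_def)

lemma inv_pair_shift_pow: "0 \<le> p \<Longrightarrow> inv_pair p (shift_pow p k) (shift_pow p (-k))"
  unfolding inv_pair_def using bounded_op_shift_pow shift_pow_add[of p k "-k"]
    shift_pow_add[of p "-k" k] shift_pow_0
  by simp

lemma shift_pow_std_basis: "shift_pow p m (std_basis j) = std_basis (j + m)"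
  using std_basis_in_lp[of j p] by (simp add: shift_pow_def std_basis_def fun_eq_iff eq_diff_eq)

lemma std_basis_upto_eq_image: "{std_basis j | j. j \<le> k} = std_basis ` {..k}"
  by auto

lemma shift_pow_image_std_basis_upto:
  "shift_pow p m ` {std_basis j | j. j \<le> k} = {std_basis j | j. j \<le> k + m}"
proof -
  have "shift_pow p m ` std_basis ` {..k} = std_basis ` (\<lambda>j. j + m) ` {..k}"
    by (simp add: image_image shift_pow_std_basis)
  also have "(\<lambda>j. j + m) ` {..k} = {..k + m}"
    by (auto simp: image_iff intro!: bexI[of _ "_ - m"])
  finally show ?thesis unfolding std_basis_upto_eq_image .
qed

lemma shift_pow_image_nest_N: "0 < p \<Longrightarrow> shift_pow p m ` nest_N p k = nest_N p (k + m)"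
  unfolding nest_N_def
  by (subst inv_pair_image_closed_span[OF _ inv_pair_shift_pow])
    (auto simp: shift_pow_image_std_basis_upto)

section \<open>The nest\<close>

lemma closed_subspace_nest_N: "0 < p \<Longrightarrow> closed_subspace p (nest_N p k)"
  unfolding nest_N_def by (intro closed_subspace_closed_span) auto

lemma std_basis_in_nest_N_iff:
  assumes p: "0 < p"
  shows "std_basis j \<in> nest_N p k \<longleftrightarrow> j \<le> k"
proof
  have "nest_N p k \<subseteq> {x \<in> lp p. \<forall>i\<in>{k<..}. x i = 0}"
    unfolding nest_N_def
    by (intro closed_span_least closed_subspace_lp_vanishing[OF p])
      (auto simp: std_basis_def std_basis_in_lp[unfolded std_basis_def])
  moreover assume "std_basis j \<in> nest_N p k"
  ultimately have "\<forall>i>k. std_basis j i = 0" by auto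
  then show "j \<le> k" unfolding std_basis_def by (metis not_le zero_neq_one)
next
  assume "j \<le> k"
  then show "std_basis j \<in> nest_N p k"
    unfolding nest_N_def by (intro subsetD[OF closed_span_superset]) blast
qed

lemma nest_N_mono: "k \<le> l \<Longrightarrow> nest_N p k \<subseteq> nest_N p l"
  unfolding nest_N_def by (rule closed_span_mono) auto

lemma nest_N_subset_iff: "0 < p \<Longrightarrow> nest_N p k \<subseteq> nest_N p l \<longleftrightarrow> k \<le> l"
  using std_basis_in_nest_N_iff[of p k k] std_basis_in_nest_N_iff[of p k l] nest_N_mono by blast

lemma nest_N_eq_iff: "0 < p \<Longrightarrow> nest_N p k = nest_N p l \<longleftrightarrow> k = l"
  using nest_N_subset_iff[of p k l] nest_N_subset_iff[of p l k] by auto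

lemma closed_subspace_nestN:
  assumes p: "0 < p" and M: "M \<in> nestN p"
  shows "closed_subspace p M"
proof -
  have "{zero_seq} = {x \<in> lp p. \<forall>j\<in>UNIV. x j = 0}"
    using zero_seq_in_lp by (auto simp: zero_seq_def)
  then show ?thesis
    using M closed_subspace_nest_N[OF p] closed_subspace_lp_vanishing[OF p, of UNIV]
      closed_subspace_lp p
    unfolding nestN_def by auto
qed

lemma Union_nestN_subset_lp: "0 < p \<Longrightarrow> \<Union>(nestN p) \<subseteq> lp p"
  using closed_subspace_subset_lp[OF closed_subspace_nestN] by blast

lemma shift_pow_image_nestN:
  assumes p: "0 < p" and M: "M \<in> nestN p"
  shows "shift_pow p m ` M \<in> nestN p"
proof -
  have "shift_pow p m ` {zero_seq} = {zero_seq}" by (simp add: shift_pow_def zero_seq_def)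
  moreover have "shift_pow p m ` lp p = lp p"
    using inv_pair_image_lp[OF inv_pair_shift_pow] p by simp
  ultimately show ?thesis
    using M shift_pow_image_nest_N[OF p] unfolding nestN_def by auto
qed

lemma inv_pair_image_nest_N:
  assumes p: "0 < p" and TR: "inv_pair p T R" and TN: "T ` nest_N p k \<in> nestN p"
  shows "\<exists>j. T ` nest_N p k = nest_N p j"
proof -
  have "T ` nest_N p k \<noteq> {zero_seq}"
  proof
    assume "T ` nest_N p k = {zero_seq}"
    then have "T (std_basis k) = zero_seq" using std_basis_in_nest_N_iff[OF p, of k k] by blast
    then have "std_basis k = R zero_seq" using inv_pair_cancel[OF TR std_basis_in_lp] by metis
    then show False
      using bounded_op_zero[OF inv_pair_bounded_op[OF inv_pair_sym[OF TR]]] std_basis_neq_zero_seq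
      by simp
  qed
  moreover have "T ` nest_N p k \<noteq> T ` lp p"
  proof
    assume "T ` nest_N p k = T ` lp p"
    then have "nest_N p k = lp p"
      using inv_pair_image_cancel[OF TR] closed_subspace_subset_lp[OF closed_subspace_nest_N[OF p]]
      by (metis order_refl)
    then show False using std_basis_in_nest_N_iff[OF p, of "k + 1" k] by simp
  qed
  ultimately show ?thesis
    using TN inv_pair_image_lp[OF TR] unfolding nestN_def by auto
qed

section \<open>The factorisation of Col(N)\<close>

lemma Col_nestN_iff:
  assumes p: "0 < p"
  shows "S \<in> Col p (nestN p)
    \<longleftrightarrow> (\<exists>R. inv_pair p S R \<and> (\<forall>M\<in>nestN p. S ` M \<in> nestN p) \<and> (\<forall>M\<in>nestN p. R ` M \<in> nestN p))"
  by (rule Col_iff[OF p]) (rule closed_subspace_nestN[OF p])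

lemma Grp_Alg_nestN_iff:
  assumes p: "0 < p"
  shows "A \<in> Grp p (Alg p (nestN p))
    \<longleftrightarrow> (\<exists>R. inv_pair p A R \<and> (\<forall>k. A ` nest_N p k = nest_N p k))"
proof -
  have fixes_iff: "(\<forall>M\<in>nestN p. A ` M = M) \<longleftrightarrow> (\<forall>k. A ` nest_N p k = nest_N p k)"
    if AR: "inv_pair p A R" for R
    using inv_pair_image_lp[OF AR] bounded_op_zero[OF inv_pair_bounded_op[OF AR]]
    unfolding nestN_def by auto
  show ?thesis
    unfolding Grp_Alg_iff[OF Union_nestN_subset_lp[OF p]]
    by (rule ex_cong1, rule conj_cong[OF refl fixes_iff])
qed

lemma Grp_comp_shift_pow_in_Col:
  assumes p: "0 < p" and A: "A \<in> Grp p (Alg p (nestN p))"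
  shows "A \<circ> shift_pow p m \<in> Col p (nestN p)"
proof -
  obtain R where AR: "inv_pair p A R" and "\<forall>M\<in>nestN p. A ` M = M"
    using Grp_Alg_iff[OF Union_nestN_subset_lp[OF p], THEN iffD1, OF A] by (elim exE conjE)
  then have AM: "\<And>M. M \<in> nestN p \<Longrightarrow> A ` M = M" by blast
  have RM: "R ` M = M" if "M \<in> nestN p" for M
    using AM[OF that]
      inv_pair_image_cancel[OF AR closed_subspace_subset_lp[OF closed_subspace_nestN[OF p that]]]
    by simp
  show ?thesis
    unfolding Col_nestN_iff[OF p]
  proof (intro exI conjI ballI)
    show "inv_pair p (A \<circ> shift_pow p m) (shift_pow p (-m) \<circ> R)"
      using inv_pair_comp[OF AR inv_pair_shift_pow] p by simp
    fix M assume M: "M \<in> nestN p"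
    have "A ` shift_pow p m ` M \<in> nestN p"
      using AM shift_pow_image_nestN[OF p M] by simp
    then show "(A \<circ> shift_pow p m) ` M \<in> nestN p" by (simp only: image_comp)
    have "shift_pow p (-m) ` R ` M \<in> nestN p"
      using RM[OF M] shift_pow_image_nestN[OF p M] by simp
    then show "(shift_pow p (-m) \<circ> R) ` M \<in> nestN p" by (simp only: image_comp)
  qed
qed

lemma Col_nestN_factor:
  assumes p: "0 < p" and S: "S \<in> Col p (nestN p)"
  obtains A m where "A \<in> Grp p (Alg p (nestN p))" "S = A \<circ> shift_pow p m"
proof -
  obtain R where SR: "inv_pair p S R"
    and SM: "\<forall>M\<in>nestN p. S ` M \<in> nestN p" and RM: "\<forall>M\<in>nestN p. R ` M \<in> nestN p"
    using Col_nestN_iff[OF p, THEN iffD1, OF S] by (elim exE conjE)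
  have N_in: "nest_N p k \<in> nestN p" for k unfolding nestN_def by blast
  have N_lp: "nest_N p k \<subseteq> lp p" for k
    using closed_subspace_subset_lp[OF closed_subspace_nest_N[OF p]] .
  have "\<exists>j. S ` nest_N p k = nest_N p j" for k
    by (rule inv_pair_image_nest_N[OF p SR SM[rule_format, OF N_in]])
  then obtain \<phi> where \<phi>: "\<And>k. S ` nest_N p k = nest_N p (\<phi> k)" by metis
  have "\<exists>j. R ` nest_N p k = nest_N p j" for k
    by (rule inv_pair_image_nest_N[OF p inv_pair_sym[OF SR] RM[rule_format, OF N_in]])
  then obtain \<psi> where \<psi>: "\<And>k. R ` nest_N p k = nest_N p (\<psi> k)" by metis
  have "\<phi> k \<le> \<phi> l \<longleftrightarrow> k \<le> l" for k l
    using inv_pair_image_subset_iff[OF SR N_lp N_lp, of k l] nest_N_subset_iff[OF p] \<phi> by metis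
  then have "strict_mono \<phi>" by (simp add: strict_monoI less_le_not_le)
  moreover have "nest_N p (\<phi> (\<psi> j)) = nest_N p j" for j
    by (simp only: \<phi>[symmetric] \<psi>[symmetric] inv_pair_image_cancel[OF inv_pair_sym[OF SR] N_lp])
  then have "surj \<phi>" using nest_N_eq_iff[OF p] by (metis surjI)
  ultimately have \<phi>_eq: "\<phi> k = k + \<phi> 0" for k by (rule strict_mono_surj_int_is_translation)
  define m where "m = \<phi> 0"
  define A where "A = S \<circ> shift_pow p (-m)"
  have "A ` nest_N p k = nest_N p k" for k
  proof -
    have "A ` nest_N p k = S ` shift_pow p (-m) ` nest_N p k" by (simp add: A_def image_comp)
    also have "\<dots> = nest_N p (\<phi> (k + - m))" by (simp add: shift_pow_image_nest_N[OF p] \<phi>)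
    finally show ?thesis using \<phi>_eq[of "k + - m"] by (simp add: m_def)
  qed
  moreover have "inv_pair p A (shift_pow p m \<circ> R)"
    using inv_pair_comp[OF SR inv_pair_shift_pow, of "-m"] p by (simp add: A_def)
  ultimately have "A \<in> Grp p (Alg p (nestN p))" using Grp_Alg_nestN_iff[OF p] by blast
  moreover have "S = A \<circ> shift_pow p m"
    using comp_lp_id[OF inv_pair_bounded_op[OF SR]]
    by (simp add: A_def o_assoc[symmetric] shift_pow_add shift_pow_0)
  ultimately show ?thesis by (rule that)
qed

lemma shift_pow_in_Grp_Alg_nestN_iff:
  assumes p: "0 < p"
  shows "shift_pow p m \<in> Grp p (Alg p (nestN p)) \<longleftrightarrow> m = 0"
proof
  assume "shift_pow p m \<in> Grp p (Alg p (nestN p))"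
  then have "shift_pow p m ` nest_N p 0 = nest_N p 0"
    using Grp_Alg_nestN_iff[OF p] by blast
  then show "m = 0" using shift_pow_image_nest_N[OF p] nest_N_eq_iff[OF p] by simp
next
  have "inv_pair p (shift_pow p 0) (shift_pow p 0)" using inv_pair_shift_pow[of p 0] p by simp
  moreover have "\<forall>k. shift_pow p 0 ` nest_N p k = nest_N p k"
    using shift_pow_image_nest_N[OF p] by simp
  ultimately show "shift_pow p m \<in> Grp p (Alg p (nestN p))" if "m = 0"
    using Grp_Alg_nestN_iff[OF p] that by blast
qed

theorem proposition5p5:
  fixes p :: real
  assumes "1 \<le> p"
  shows "Col p (nestN p) = {A \<circ> T | A T. A \<in> Grp p (Alg p (nestN p)) \<and> T \<in> Orb p}
       \<and> Grp p (Alg p (nestN p)) \<inter> Orb p = {lp_id p}"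
proof
  have p: "0 < p" using assms by simp
  show "Col p (nestN p) = {A \<circ> T | A T. A \<in> Grp p (Alg p (nestN p)) \<and> T \<in> Orb p}"
  proof (intro equalityI subsetI)
    fix S assume "S \<in> Col p (nestN p)"
    then obtain A m where "A \<in> Grp p (Alg p (nestN p))" "S = A \<circ> shift_pow p m"
      by (rule Col_nestN_factor[OF p])
    then show "S \<in> {A \<circ> T | A T. A \<in> Grp p (Alg p (nestN p)) \<and> T \<in> Orb p}"
      unfolding Orb_def by blast
  next
    fix S assume "S \<in> {A \<circ> T | A T. A \<in> Grp p (Alg p (nestN p)) \<and> T \<in> Orb p}"
    then obtain A m where "A \<in> Grp p (Alg p (nestN p))" "S = A \<circ> shift_pow p m"
      unfolding Orb_def by blast
    then show "S \<in> Col p (nestN p)" using Grp_comp_shift_pow_in_Col[OF p] by simp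
  qed
  have "Grp p (Alg p (nestN p)) \<inter> Orb p
      = shift_pow p ` {m. shift_pow p m \<in> Grp p (Alg p (nestN p))}"
    unfolding Orb_def by blast
  also have "\<dots> = {lp_id p}"
    using shift_pow_in_Grp_Alg_nestN_iff[OF p] shift_pow_0 by simp
  finally show "Grp p (Alg p (nestN p)) \<inter> Orb p = {lp_id p}" .
qed

end
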